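(* Consider the lattice Boltzmann scheme on $\mathbb{Z}$ described in the context, with bulk operator $\hat{E}(\kappa)$. If the Finite Difference scheme generated by the characteristic polynomial $\det(zI_q-\hat{E}(\kappa))$ is $L^2$ stable (in the sense of the context), then the lattice Boltzmann scheme is $L^2$ stable (in the sense of the context). The converse implication is false in general: there exist lattice Boltzmann schemes of this form which are $L^2$ stable while the associated Finite Difference scheme is not.
   Context: Fix an integer $q\geq 2$, integer velocities $c_1,\dots,c_q\in\mathbb{Z}$, an invertible moment matrix $M\in\mathbb{R}^{q\times q}$, relaxation parameters $s_1\in\mathbb{R}$ and $s_2,\dots,s_q\in(0,2]$, and an equilibrium vector $\epsilon\in\mathbb{R}^q$ with $\epsilon_1=1$. Let $e_i$ denote the canonical basis vectors and set $K:=I_q+\mathrm{diag}(s_1,\dots,s_q)(\epsilon e_1^{\mathsf T}-I_q)$. For $\kappa\in\mathbb{C}\setminus\{0\}$ let $\hat{E}(\kappa):=M\,\mathrm{diag}(\kappa^{-c_1},\dots,\kappa^{-c_q})\,M^{-1}K=\sum_j E_j\kappa^j$, where $E_j:=\sum_{i:\,c_i=-j}Me_ie_i^{\mathsf T}M^{-1}K$. The lattice Boltzmann scheme on $\mathbb{Z}$ acts on moment vectors $m^n_j\in\mathbb{R}^q$ by $m^{n+1}_j=\sum_{k}E_k m^n_{j+k}$, $j\in\mathbb{Z}$, with space step $\Delta x>0$. It is called $L^2$ stable if there is $C>0$ such that for all $\Delta x>0$, all initial data $(m^0_j)_{j\in\mathbb{Z}}\in(\ell^2)^q$ and all $n\in\mathbb{N}$,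 $\sum_{j\in\mathbb{Z}}\Delta x|m^n_j|^2\leq C\sum_{j\in\mathbb{Z}}\Delta x|m^0_j|^2$ (any norm $|\cdot|$ on $\mathbb{R}^q$). Associated Finite Difference scheme: write $\det(zI_q-\hat{E}(\kappa))=z^q+\sum_{\ell=q-1-s}^{q-1}\gamma_\ell(\kappa)z^\ell$, where $s:=\#\{\ell\in\{2,\dots,q\}: s_\ell\neq 1\}$ and the $\gamma_\ell$ are Laurent polynomials in $\kappa$. The scalar scheme is $u^{n+1}_j=-\sum_{\ell=0}^{s}\gamma_{q-\ell-1}(\mathsf T)u^{n-\ell}_j$ for $n\geq s$, $j\in\mathbb{Z}$, where $\mathsf T$ is the forward shift $(\mathsf T u)_j=u_{j+1}$. It is called $L^2$ stable if there is $C>0$ such that for all $\Delta x>0$, all initial data $(u^0_j)_j,\dots,(u^{s-1}_j)_j\in\ell^2$ and all $n\in\mathbb{N}$, $\sum_{j}\Delta x|u^n_j|^2\leq C\sum_{\ell=0}^{s-1}\sum_j\Delta x|u^\ell_j|^2$. *)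

theory Defs
  imports "HOL-Analysis.Analysis" "Jordan_Normal_Form.Determinant"
begin

text \<open>Conventions: indices are 0-based, i.e. the paper's index i in 1..q is i-1 here.
  Velocities c :: nat => int, relaxation parameters sr :: nat => real, equilibrium
  eps :: nat => real (eps 0 = 1 is the paper's epsilon_1 = 1).\<close>

definition minv :: "nat \<Rightarrow> real mat \<Rightarrow> real mat" where
  "minv q M = (SOME B. B \<in> carrier_mat q q \<and> M * B = 1\<^sub>m q \<and> B * M = 1\<^sub>m q)"

definition lbm_params :: "nat \<Rightarrow> (nat \<Rightarrow> int) \<Rightarrow> real mat \<Rightarrow> (nat \<Rightarrow> real) \<Rightarrow> (nat \<Rightarrow> real) \<Rightarrow> bool" where
  "lbm_params q c M sr eps \<longleftrightarrow> q \<ge> 2 \<and> M \<in> carrier_mat q q \<and> invertible_mat M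
     \<and> (\<forall>i. 1 \<le> i \<and> i < q \<longrightarrow> 0 < sr i \<and> sr i \<le> 2) \<and> eps 0 = 1"

text \<open>K = I + diag(s)(eps e_1^T - I).\<close>
definition Kmat :: "nat \<Rightarrow> (nat \<Rightarrow> real) \<Rightarrow> (nat \<Rightarrow> real) \<Rightarrow> real mat" where
  "Kmat q sr eps = mat q q (\<lambda>(i,j). (if i = j then 1 else 0)
      + sr i * ((if j = 0 then eps i else 0) - (if i = j then 1 else 0)))"

definition Ehat :: "nat \<Rightarrow> (nat \<Rightarrow> int) \<Rightarrow> real mat \<Rightarrow> (nat \<Rightarrow> real) \<Rightarrow> (nat \<Rightarrow> real) \<Rightarrow> complex \<Rightarrow> complex mat" where
  "Ehat q c M sr eps \<kappa> =
     map_mat complex_of_real M * mat q q (\<lambda>(i,j). if i = j then \<kappa> powi (- c i) else 0)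
     * map_mat complex_of_real (minv q M) * map_mat complex_of_real (Kmat q sr eps)"

definition Emat :: "nat \<Rightarrow> (nat \<Rightarrow> int) \<Rightarrow> real mat \<Rightarrow> (nat \<Rightarrow> real) \<Rightarrow> (nat \<Rightarrow> real) \<Rightarrow> int \<Rightarrow> real mat" where
  "Emat q c M sr eps k =
     M * mat q q (\<lambda>(i,j). if i = j \<and> c i = - k then 1 else 0) * minv q M * Kmat q sr eps"

definition vsq :: "real vec \<Rightarrow> real" where
  "vsq v = (\<Sum>i<dim_vec v. (v $ i)^2)"

definition lbm_stable :: "nat \<Rightarrow> (nat \<Rightarrow> int) \<Rightarrow> real mat \<Rightarrow> (nat \<Rightarrow> real) \<Rightarrow> (nat \<Rightarrow> real) \<Rightarrow> bool" where
  "lbm_stable q c M sr eps \<longleftrightarrow>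
    (\<exists>C>0. \<forall>dx>0. \<forall>m :: nat \<Rightarrow> int \<Rightarrow> real vec.
       (\<forall>j. dim_vec (m 0 j) = q) \<longrightarrow>
       ((\<lambda>j. vsq (m 0 j)) summable_on UNIV) \<longrightarrow>
       (\<forall>n j. m (Suc n) j = vec q (\<lambda>r. \<Sum>k\<in>(\<lambda>i. - c i) ` {..<q}. (Emat q c M sr eps k *\<^sub>v m n (j + k)) $ r)) \<longrightarrow>
       (\<forall>n. (\<Sum>\<^sub>\<infinity>j. dx * vsq (m n j)) \<le> C * (\<Sum>\<^sub>\<infinity>j. dx * vsq (m 0 j))))"

text \<open>gam l k is the coefficient of kappa^k in the Laurent polynomial gamma_l:
  det(z I - Ehat(kappa)) = z^q + sum_{l<q} gamma_l(kappa) z^l for all kappa ~= 0, z.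
  These coefficients are uniquely determined.\<close>
definition char_coeffs :: "nat \<Rightarrow> (nat \<Rightarrow> int) \<Rightarrow> real mat \<Rightarrow> (nat \<Rightarrow> real) \<Rightarrow> (nat \<Rightarrow> real)
     \<Rightarrow> (nat \<Rightarrow> int \<Rightarrow> real) \<Rightarrow> bool" where
  "char_coeffs q c M sr eps gam \<longleftrightarrow>
     (\<forall>l. finite {k. gam l k \<noteq> 0}) \<and>
     (\<forall>\<kappa> z. \<kappa> \<noteq> 0 \<longrightarrow>
        det (z \<cdot>\<^sub>m 1\<^sub>m q - Ehat q c M sr eps \<kappa>) =
        z ^ q + (\<Sum>l<q. (\<Sum>k\<in>{k. gam l k \<noteq> 0}. complex_of_real (gam l k) * \<kappa> powi k) * z ^ l))"

text \<open>s = number of l in 2..q (paper indexing) with s_l ~= 1.\<close>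
definition num_s :: "nat \<Rightarrow> (nat \<Rightarrow> real) \<Rightarrow> nat" where
  "num_s q sr = card {l. 1 \<le> l \<and> l < q \<and> sr l \<noteq> 1}"

definition apply_shift :: "(int \<Rightarrow> real) \<Rightarrow> (int \<Rightarrow> real) \<Rightarrow> int \<Rightarrow> real" where
  "apply_shift g u j = (\<Sum>k\<in>{k. g k \<noteq> 0}. g k * u (j + k))"

definition fd_stable :: "nat \<Rightarrow> nat \<Rightarrow> (nat \<Rightarrow> int \<Rightarrow> real) \<Rightarrow> bool" where
  "fd_stable q s gam \<longleftrightarrow>
    (\<exists>C>0. \<forall>dx>0. \<forall>u :: nat \<Rightarrow> int \<Rightarrow> real.
       (\<forall>l\<le>s. (\<lambda>j. (u l j)^2) summable_on UNIV) \<longrightarrow>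
       (\<forall>n\<ge>s. \<forall>j. u (Suc n) j = - (\<Sum>l\<le>s. apply_shift (gam (q - l - 1)) (u (n - l)) j)) \<longrightarrow>
       (\<forall>n. (\<Sum>\<^sub>\<infinity>j. dx * (u n j)^2) \<le> C * (\<Sum>l\<le>s. \<Sum>\<^sub>\<infinity>j. dx * (u l j)^2)))"

end

theory Submission
  imports Defs "Jordan_Normal_Form.Char_Poly"
begin

text \<open>
  The symbol \<open>Ehat(\<kappa>) = \<Sum>\<^sub>k \<kappa>\<^sup>k E\<^sub>k\<close> of the lattice Boltzmann scheme has characteristic polynomial
  \<open>z\<^sup>q + \<Sum>\<^sub>l \<gamma>\<^sub>l(\<kappa>) z\<^sup>l\<close>, so by Cayley--Hamilton \<open>Ehat\<^sup>q + \<Sum>\<^sub>l \<gamma>\<^sub>l(\<kappa>) Ehat\<^sup>l = 0\<close>. Both sides are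
  Laurent polynomials in \<open>\<kappa>\<close>, and an identity between Laurent polynomials holds coefficientwise,
  so it transfers from the symbol to the scheme: every component of every solution satisfies
  \<open>m\<^sup>n\<^sup>+\<^sup>q + \<Sum>\<^sub>l \<gamma>\<^sub>l(T) m\<^sup>n\<^sup>+\<^sup>l = 0\<close>. The \<open>q - 1 - s\<close> columns of \<open>Ehat\<close> belonging to relaxation rates
  equal to 1 vanish, hence so do the lowest \<open>q - 1 - s\<close> coefficients of the characteristic polynomial,
  and the relation says that from time \<open>q - 1 - s\<close> on each component solves the Finite Difference
  scheme. Its stability bounds all later times by the times \<open>q - 1 - s, \<dots>, q - 1\<close>, and these, like
  all earlier ones, are bounded by the crude estimate \<open>\<parallel>m\<^sup>n\<^sup>+\<^sup>1\<parallel> \<le> B \<parallel>m\<^sup>n\<parallel>\<close>.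

  Conversely, a scheme whose symbol is \<open>diag(1, -1, -1)\<close> is an isometry, but the double root \<open>-1\<close>
  of its characteristic polynomial lets the Finite Difference scheme grow linearly.
\<close>

unbundle no vec_syntax

section \<open>Laurent polynomials\<close>

definition laurent_eval :: "(int \<Rightarrow> real) \<Rightarrow> complex \<Rightarrow> complex" where
  "laurent_eval g \<kappa> = (\<Sum>k\<in>{k. g k \<noteq> 0}. complex_of_real (g k) * \<kappa> powi k)"

lemma laurent_coeff_eq_0:
  fixes b :: "int \<Rightarrow> real"
  assumes D: "finite D"
    and zero: "\<And>\<kappa>::complex. \<kappa> \<noteq> 0 \<Longrightarrow> (\<Sum>d\<in>D. complex_of_real (b d) * \<kappa> powi d) = 0"
    and d0: "d0 \<in> D"
  shows "b d0 = 0"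
proof -
  obtain N :: nat where N: "\<And>d. d \<in> D \<Longrightarrow> - int N \<le> d"
  proof
    fix d assume "d \<in> D"
    then have "\<bar>d\<bar> \<le> (\<Sum>e\<in>D. \<bar>e\<bar>)" using D by (intro member_le_sum) auto
    then show "- int (nat (\<Sum>e\<in>D. \<bar>e\<bar>)) \<le> d" by linarith
  qed
  \<comment> \<open>Multiplied by \<open>\<kappa>\<^sup>N\<close>, the Laurent polynomial becomes a polynomial vanishing on \<open>- {0}\<close>.\<close>
  define P :: "complex poly" where "P = (\<Sum>d\<in>D. monom (complex_of_real (b d)) (nat (d + int N)))"
  have poly_P: "poly P \<kappa> = \<kappa> ^ N * (\<Sum>d\<in>D. complex_of_real (b d) * \<kappa> powi d)" if "\<kappa> \<noteq> 0" for \<kappa>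
  proof -
    have "\<kappa> ^ nat (d + int N) = \<kappa> ^ N * \<kappa> powi d" if "d \<in> D" for d
    proof -
      have "d + int N = int (nat (d + int N))" using N[OF that] by simp
      then have "\<kappa> ^ nat (d + int N) = \<kappa> powi (d + int N)" by (metis power_int_of_nat)
      then show ?thesis using \<open>\<kappa> \<noteq> 0\<close> by (simp add: power_int_add power_int_of_nat)
    qed
    then show ?thesis
      unfolding P_def by (simp add: poly_sum poly_monom sum_distrib_left mult_ac)
  qed
  have "P = 0"
  proof (rule ccontr)
    assume "P \<noteq> 0"
    then have "finite {x. poly P x = 0}" by (rule poly_roots_finite)
    moreover have "- {0} \<subseteq> {x. poly P x = 0}" using poly_P zero by auto
    ultimately have "finite (- {0::complex})" by (rule finite_subset[rotated])
    then show False using infinite_UNIV_char_0[where 'a=complex] by simp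
  qed
  have "coeff P (nat (d0 + int N)) = (\<Sum>d\<in>D. if d = d0 then complex_of_real (b d) else 0)"
    unfolding P_def coeff_sum
  proof (rule sum.cong[OF refl])
    fix d assume "d \<in> D"
    then show "coeff (monom (complex_of_real (b d)) (nat (d + int N))) (nat (d0 + int N))
        = (if d = d0 then complex_of_real (b d) else 0)"
      using N[of d] N[OF d0] by (auto simp: coeff_monom)
  qed
  also have "\<dots> = complex_of_real (b d0)" using D d0 by simp
  finally show ?thesis using \<open>P = 0\<close> by simp
qed

lemma laurent_sum_eq_0_transfer:
  fixes a :: "'i \<Rightarrow> real" and \<sigma> :: "'i \<Rightarrow> int"
  assumes I: "finite I"
    and zero: "\<And>\<kappa>::complex. \<kappa> \<noteq> 0 \<Longrightarrow> (\<Sum>i\<in>I. complex_of_real (a i) * \<kappa> powi \<sigma> i) = 0"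
  shows "(\<Sum>i\<in>I. a i * x (\<sigma> i)) = (0::real)"
proof -
  define b where "b d = (\<Sum>i\<in>{i\<in>I. \<sigma> i = d}. a i)" for d
  have by_exponent: "(\<Sum>i\<in>I. of_real (a i) * f (\<sigma> i)) = (\<Sum>d\<in>\<sigma> ` I. of_real (b d) * f d)"
    for f :: "int \<Rightarrow> 'a::real_algebra_1"
  proof -
    have "(\<Sum>i\<in>I. of_real (a i) * f (\<sigma> i))
        = (\<Sum>d\<in>\<sigma> ` I. \<Sum>i\<in>{i\<in>I. \<sigma> i = d}. of_real (a i) * f (\<sigma> i))"
      by (rule sum.image_gen) (rule I)
    also have "\<dots> = (\<Sum>d\<in>\<sigma> ` I. of_real (b d) * f d)"
      unfolding b_def by (auto simp: sum_distrib_right intro!: sum.cong)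
    finally show ?thesis .
  qed
  have "b d = 0" if "d \<in> \<sigma> ` I" for d
  proof (rule laurent_coeff_eq_0[OF _ _ that])
    fix \<kappa> :: complex assume "\<kappa> \<noteq> 0"
    then show "(\<Sum>d\<in>\<sigma> ` I. complex_of_real (b d) * \<kappa> powi d) = 0"
      using zero by_exponent[of "\<lambda>d. \<kappa> powi d"] by (simp add: mult.commute)
  qed (use I in simp)
  then show ?thesis using by_exponent[of x] by simp
qed

section \<open>Matrices\<close>

lemma index_mult_mat_sum:
  assumes "A \<in> carrier_mat n m" "B \<in> carrier_mat m p" "i < n" "j < p"
  shows "(A * B) $$ (i,j) = (\<Sum>l<m. A $$ (i,l) * B $$ (l,j))"
  using assms by (simp add: scalar_prod_def atLeast0LessThan)

lemma index_mult_mat_vec_sum: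
  assumes "A \<in> carrier_mat n m" "dim_vec v = m" "i < n"
  shows "(A *\<^sub>v v) $ i = (\<Sum>l<m. A $$ (i,l) * v $ l)"
  using assms by (simp add: scalar_prod_def atLeast0LessThan)

lemma index_mult_diagonal_mat:
  assumes P: "P \<in> carrier_mat n n" and D: "D \<in> carrier_mat n n"
    and diag: "\<And>a b. a < n \<Longrightarrow> b < n \<Longrightarrow> a \<noteq> b \<Longrightarrow> D $$ (a,b) = 0"
    and a: "a < n" and b: "b < n"
  shows "(P * D) $$ (a,b) = P $$ (a,b) * D $$ (b,b)"
proof -
  have "(P * D) $$ (a,b) = (\<Sum>l<n. P $$ (a,l) * D $$ (l,b))"
    by (rule index_mult_mat_sum[OF P D a b])
  also have "\<dots> = (\<Sum>l<n. if l = b then P $$ (a,l) * D $$ (l,b) else 0)"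
    using diag b by (intro sum.cong) auto
  finally show ?thesis using b by simp
qed

lemma index_diagonal_sandwich:
  assumes P: "P \<in> carrier_mat n n" and D: "D \<in> carrier_mat n n" and W: "W \<in> carrier_mat n n"
    and diag: "\<And>a b. a < n \<Longrightarrow> b < n \<Longrightarrow> a \<noteq> b \<Longrightarrow> D $$ (a,b) = 0"
    and i: "i < n" and j: "j < n"
  shows "(P * D * W) $$ (i,j) = (\<Sum>a<n. P $$ (i,a) * D $$ (a,a) * W $$ (a,j))"
proof -
  have "(P * D * W) $$ (i,j) = (\<Sum>a<n. (P * D) $$ (i,a) * W $$ (a,j))"
    using P D W i j by (intro index_mult_mat_sum) auto
  then show ?thesis using index_mult_diagonal_mat[OF P D diag i] by simp
qed

definition adj_coeff_mat :: "'a :: comm_ring_1 mat \<Rightarrow> nat \<Rightarrow> 'a mat" where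
  "adj_coeff_mat A k =
     mat (dim_row A) (dim_row A) (\<lambda>(i,j). coeff (adj_mat (char_poly_matrix A) $$ (i,j)) k)"

lemma dim_adj_coeff_mat [simp]:
  "dim_row (adj_coeff_mat A k) = dim_row A" "dim_col (adj_coeff_mat A k) = dim_row A"
  unfolding adj_coeff_mat_def by auto

lemma adj_coeff_mat_carrier [simp]: "A \<in> carrier_mat n n \<Longrightarrow> adj_coeff_mat A k \<in> carrier_mat n n"
  by auto

lemma adj_coeff_mat_eventually_0:
  assumes A: "A \<in> carrier_mat n n"
  obtains N where "\<And>k. N \<le> k \<Longrightarrow> adj_coeff_mat A k = 0\<^sub>m n n"
proof -
  let ?deg = "\<lambda>p. degree (adj_mat (char_poly_matrix A) $$ p)"
  have "adj_coeff_mat A k = 0\<^sub>m n n" if "Suc (Max (?deg ` ({..<n} \<times> {..<n}))) \<le> k" for k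
  proof (rule eq_matI)
    fix a b assume "a < dim_row (0\<^sub>m n n :: 'a mat)" "b < dim_col (0\<^sub>m n n :: 'a mat)"
    then have ab: "(a,b) \<in> {..<n} \<times> {..<n}" by auto
    then have "?deg (a,b) \<le> Max (?deg ` ({..<n} \<times> {..<n}))" by (intro Max_ge) auto
    then have "?deg (a,b) < k" using that by linarith
    then show "adj_coeff_mat A k $$ (a,b) = 0\<^sub>m n n $$ (a,b)"
      using ab A by (auto simp: adj_coeff_mat_def coeff_eq_0)
  qed (use A in \<open>auto simp: adj_coeff_mat_def\<close>)
  then show ?thesis by (rule that)
qed

lemma adj_coeff_mat_recurrence:
  fixes A :: "'a :: comm_ring_1 mat"
  assumes A: "A \<in> carrier_mat n n"
  shows "(if k = 0 then 0\<^sub>m n n else adj_coeff_mat A (k - 1)) - A * adj_coeff_mat A k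
       = coeff (char_poly A) k \<cdot>\<^sub>m 1\<^sub>m n"
proof -
  \<comment> \<open>Compare the coefficients of \<open>X^k\<close> in \<open>(X I - A) adj (X I - A) = char_poly A I\<close>.\<close>
  define CP where "CP = char_poly_matrix A"
  define Adj where "Adj = adj_mat CP"
  have CP: "CP \<in> carrier_mat n n" unfolding CP_def using A by simp
  have Adj: "Adj \<in> carrier_mat n n" unfolding Adj_def using adj_mat(1)[OF CP] .
  have CP_Adj: "CP * Adj = char_poly A \<cdot>\<^sub>m 1\<^sub>m n"
    unfolding Adj_def char_poly_def CP_def[symmetric] using adj_mat(2)[OF CP] .
  have CP_entry: "CP $$ (a,b) = (if a = b then [:0,1:] else 0) + [:- A $$ (a,b):]"
    if "a < n" "b < n" for a b
    unfolding CP_def char_poly_matrix_def using A that by auto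
  have coeff_Adj: "adj_coeff_mat A k $$ (a,b) = coeff (Adj $$ (a,b)) k" if "a < n" "b < n" for a b k
    unfolding adj_coeff_mat_def Adj_def CP_def using A that by auto
  show ?thesis
  proof (rule eq_matI)
    fix a b assume "a < dim_row (coeff (char_poly A) k \<cdot>\<^sub>m 1\<^sub>m n)"
      and "b < dim_col (coeff (char_poly A) k \<cdot>\<^sub>m 1\<^sub>m n)"
    then have a: "a < n" and b: "b < n" by auto
    have "(if a = b then coeff (char_poly A) k else 0) = coeff ((CP * Adj) $$ (a,b)) k"
      unfolding CP_Adj using a b by simp
    also have "\<dots> = (\<Sum>l<n. coeff (CP $$ (a,l) * Adj $$ (l,b)) k)"
      by (simp add: index_mult_mat_sum[OF CP Adj a b] coeff_sum)
    also have "\<dots> = (\<Sum>l<n. if k = 0 then 0 else if l = a then coeff (Adj $$ (l,b)) (k - 1) else 0)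
        - (\<Sum>l<n. A $$ (a,l) * coeff (Adj $$ (l,b)) k)"
      unfolding sum_subtractf[symmetric] using a
      by (intro sum.cong) (auto simp: CP_entry distrib_right coeff_pCons split: nat.split)
    also have "\<dots> = (if k = 0 then 0 else adj_coeff_mat A (k - 1) $$ (a,b))
        - (A * adj_coeff_mat A k) $$ (a,b)"
      using a b by (cases k) (simp_all add: index_mult_mat_sum[OF A adj_coeff_mat_carrier[OF A] a b] coeff_Adj)
    finally show "((if k = 0 then 0\<^sub>m n n else adj_coeff_mat A (k - 1)) - A * adj_coeff_mat A k) $$ (a,b)
        = (coeff (char_poly A) k \<cdot>\<^sub>m 1\<^sub>m n) $$ (a,b)"
      using a b A by auto
  qed (use A in auto)
qed

lemma cayley_hamilton_entry:
  fixes A :: "'a :: comm_ring_1 mat"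
  assumes A: "A \<in> carrier_mat n n" and i: "i < n" and j: "j < n"
  shows "(\<Sum>k\<le>n. coeff (char_poly A) k * (A ^\<^sub>m k) $$ (i,j)) = 0"
proof -
  define B where "B k = (if k = 0 then 0\<^sub>m n n else adj_coeff_mat A (k - 1))" for k
  define T where "T k = (A ^\<^sub>m k * B k) $$ (i,j)" for k
  have B: "B k \<in> carrier_mat n n" for k unfolding B_def using A by simp
  \<comment> \<open>By the recurrence for the coefficients of the adjugate, \<open>\<Sum> c\<^sub>k A\<^sup>k\<close> telescopes.\<close>
  have telescope: "coeff (char_poly A) k * (A ^\<^sub>m k) $$ (i,j) = T k - T (Suc k)" for k
  proof -
    have Ak: "A ^\<^sub>m k \<in> carrier_mat n n" using A by simp
    have "coeff (char_poly A) k * (A ^\<^sub>m k) $$ (i,j) = (A ^\<^sub>m k * (coeff (char_poly A) k \<cdot>\<^sub>m 1\<^sub>m n)) $$ (i,j)"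
      using Ak A i j by (simp add: mult_smult_distrib[OF Ak one_carrier_mat] right_mult_one_mat[OF Ak])
    also have "\<dots> = (A ^\<^sub>m k * B k - A ^\<^sub>m Suc k * adj_coeff_mat A k) $$ (i,j)"
      unfolding adj_coeff_mat_recurrence[OF A, symmetric] B_def[symmetric]
      using Ak A B by (simp add: mult_minus_distrib_mat[OF Ak B[of k]] assoc_mult_mat[of _ n n _ n _ n])
    also have "\<dots> = T k - T (Suc k)"
      using A B i j by (simp add: T_def B_def)
    finally show ?thesis .
  qed
  obtain N where N: "\<And>k. N \<le> k \<Longrightarrow> adj_coeff_mat A k = 0\<^sub>m n n"
    using adj_coeff_mat_eventually_0[OF A] by blast
  have "(\<Sum>k\<le>n. coeff (char_poly A) k * (A ^\<^sub>m k) $$ (i,j))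
      = (\<Sum>k\<le>max n N. coeff (char_poly A) k * (A ^\<^sub>m k) $$ (i,j))"
    using degree_monic_char_poly[OF A] by (intro sum.mono_neutral_left) (auto simp: coeff_eq_0)
  also have "\<dots> = T 0 - T (Suc (max n N))"
    unfolding telescope by (rule sum_telescope)
  also have "\<dots> = 0"
    using A i j N[of "max n N"] by (simp add: T_def B_def)
  finally show ?thesis .
qed

lemma monom_dvd_char_poly_of_zero_cols:
  fixes A :: "'a :: comm_ring_1 mat"
  assumes A: "A \<in> carrier_mat n n" and Z: "Z \<subseteq> {..<n}"
    and zero: "\<And>i j. i < n \<Longrightarrow> j \<in> Z \<Longrightarrow> A $$ (i,j) = 0"
  shows "monom 1 (card Z) dvd char_poly A"
proof -
  define CP where "CP = char_poly_matrix A"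
  have CP: "CP \<in> carrier_mat n n" unfolding CP_def using A by simp
  \<comment> \<open>The columns of \<open>X I - A\<close> indexed by \<open>Z\<close> are \<open>X\<close> times unit vectors.\<close>
  define N where "N = mat n n (\<lambda>(i,j). if j \<in> Z then (if i = j then 1 else 0) else CP $$ (i,j))"
  define D :: "'a poly mat" where
    "D = mat n n (\<lambda>(i,j). if i = j then (if i \<in> Z then [:0,1:] else 1) else 0)"
  have N: "N \<in> carrier_mat n n" and D: "D \<in> carrier_mat n n" unfolding N_def D_def by auto
  have "CP = N * D"
  proof (rule eq_matI)
    fix a b assume "a < dim_row (N * D)" "b < dim_col (N * D)"
    then have a: "a < n" and b: "b < n" using N D by auto
    have "(N * D) $$ (a,b) = N $$ (a,b) * D $$ (b,b)"
      by (rule index_mult_diagonal_mat[OF N D _ a b]) (auto simp: D_def)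
    then show "CP $$ (a,b) = (N * D) $$ (a,b)"
      using zero[OF a] a b A by (auto simp: N_def D_def CP_def char_poly_matrix_def)
  qed (use CP N D in auto)
  have "diag_mat D = map (\<lambda>j. if j \<in> Z then [:0,1:] else 1) [0..<n]"
    by (auto intro!: map_cong simp: diag_mat_def D_def)
  then have "det D = prod_list (map (\<lambda>j. if j \<in> Z then [:0,1:] else 1) [0..<n])"
    by (subst det_upper_triangular[OF _ D]) (auto simp: D_def upper_triangular_def)
  also have "\<dots> = (\<Prod>j\<in>{0..<n}. if j \<in> Z then [:0,1:] else 1)"
    by (metis distinct_upt prod.distinct_set_conv_list set_upt)
  also have "\<dots> = monom 1 (card Z)"
    using Z by (simp add: prod.If_cases monom_altdef Int_absorb1 atLeast0LessThan)
  finally have "char_poly A = det N * monom 1 (card Z)"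
    unfolding char_poly_def CP_def[symmetric] \<open>CP = N * D\<close> by (simp add: det_mult[OF N D])
  then show ?thesis by simp
qed

section \<open>Square-summable sequences\<close>

lemma vsq_nonneg: "0 \<le> vsq v"
  unfolding vsq_def by (simp add: sum_nonneg)

lemma component_sq_le_vsq: "r < dim_vec v \<Longrightarrow> (v $ r)^2 \<le> vsq (v :: real vec)"
  unfolding vsq_def by (rule member_le_sum) auto

lemma summable_on_component_sq:
  fixes v :: "'a \<Rightarrow> real vec"
  assumes "(\<lambda>j. vsq (v j)) summable_on A" and "\<And>j. r < dim_vec (v j)"
  shows "(\<lambda>j. (v j $ r)^2) summable_on A"
  using assms(1) by (rule summable_on_comparison_test) (use assms(2) component_sq_le_vsq in auto)

lemma summable_on_sum:
  fixes f :: "'i \<Rightarrow> 'a \<Rightarrow> real"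
  assumes "finite I" and "\<And>i. i \<in> I \<Longrightarrow> f i summable_on A"
  shows "(\<lambda>x. \<Sum>i\<in>I. f i x) summable_on A"
  using assms by (induction I rule: finite_induct) (auto intro: summable_on_add)

lemma infsum_sum:
  fixes f :: "'i \<Rightarrow> 'a \<Rightarrow> real"
  assumes "finite I" and "\<And>i. i \<in> I \<Longrightarrow> f i summable_on A"
  shows "(\<Sum>\<^sub>\<infinity>x\<in>A. \<Sum>i\<in>I. f i x) = (\<Sum>i\<in>I. \<Sum>\<^sub>\<infinity>x\<in>A. f i x)"
  using assms
proof (induction I rule: finite_induct)
  case (insert i I)
  then show ?case by (simp add: infsum_add summable_on_sum)
qed simp

lemma infsum_vsq_components:
  fixes v :: "'a \<Rightarrow> real vec"
  assumes "(\<lambda>j. vsq (v j)) summable_on A" and "\<And>j. dim_vec (v j) = n"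
  shows "(\<Sum>\<^sub>\<infinity>j\<in>A. vsq (v j)) = (\<Sum>r<n. \<Sum>\<^sub>\<infinity>j\<in>A. (v j $ r)^2)"
  using assms infsum_sum[of "{..<n}" "\<lambda>r j. (v j $ r)^2" A] summable_on_component_sq[OF assms(1)]
  by (simp add: vsq_def)

lemma bij_betw_add_int: "bij_betw (\<lambda>j::int. j + k) UNIV UNIV"
  by (rule bij_betwI[of _ _ _ "\<lambda>j. j - k"]) auto

lemma summable_on_shift: "f summable_on UNIV \<Longrightarrow> (\<lambda>j::int. f (j + k)) summable_on UNIV"
  by (simp add: summable_on_reindex_bij_betw[OF bij_betw_add_int])

lemma infsum_shift: "(\<Sum>\<^sub>\<infinity>j::int. f (j + k)) = (\<Sum>\<^sub>\<infinity>j. f j)"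
  by (rule infsum_reindex_bij_betw[OF bij_betw_add_int])

section \<open>Matrix-valued difference schemes\<close>

lemma pow_mat_Suc_left: "A \<in> carrier_mat n n \<Longrightarrow> A ^\<^sub>m Suc t = A * A ^\<^sub>m t"
proof (induction t)
  case (Suc t)
  have "A ^\<^sub>m Suc (Suc t) = (A * A ^\<^sub>m t) * A" using Suc by simp
  also have "\<dots> = A * A ^\<^sub>m Suc t" using Suc.prems by (simp add: assoc_mult_mat[of _ n n _ n _ n])
  finally show ?case .
qed simp

lemma sum_mult_nested_swap:
  "(\<Sum>c\<in>C. a c * (\<Sum>w\<in>W. \<Sum>d\<in>D. b c w d * x w d))
     = (\<Sum>w\<in>W. \<Sum>d\<in>D. (\<Sum>c\<in>C. a c * b c w d) * (x w d :: 'a::comm_semiring_0))"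
proof -
  have "(\<Sum>c\<in>C. a c * (\<Sum>w\<in>W. \<Sum>d\<in>D. b c w d * x w d))
      = (\<Sum>c\<in>C. \<Sum>w\<in>W. \<Sum>d\<in>D. a c * b c w d * x w d)"
    by (simp add: sum_distrib_left mult.assoc)
  also have "\<dots> = (\<Sum>w\<in>W. \<Sum>c\<in>C. \<Sum>d\<in>D. a c * b c w d * x w d)"
    by (rule sum.swap)
  also have "\<dots> = (\<Sum>w\<in>W. \<Sum>d\<in>D. \<Sum>c\<in>C. a c * b c w d * x w d)"
    by (intro sum.cong refl) (rule sum.swap)
  finally show ?thesis by (simp add: sum_distrib_right)
qed

locale laurent_scheme =
  fixes q :: nat and Ks :: "int set" and E :: "int \<Rightarrow> real mat"
  assumes finite_Ks: "finite Ks" and E_carrier [simp]: "\<And>k. E k \<in> carrier_mat q q"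
begin

definition symbol :: "complex \<Rightarrow> complex mat" where
  "symbol \<kappa> = mat q q (\<lambda>(i,j). \<Sum>k\<in>Ks. \<kappa> powi k * complex_of_real (E k $$ (i,j)))"

definition solution :: "(nat \<Rightarrow> int \<Rightarrow> real vec) \<Rightarrow> bool" where
  "solution m \<longleftrightarrow> (\<forall>j. dim_vec (m 0 j) = q) \<and>
     (\<forall>n j. m (Suc n) j = vec q (\<lambda>r. \<Sum>k\<in>Ks. (E k *\<^sub>v m n (j + k)) $ r))"

lemma symbol_carrier [simp]: "symbol \<kappa> \<in> carrier_mat q q"
  unfolding symbol_def by simp

lemma solution_dim: "solution m \<Longrightarrow> dim_vec (m n j) = q"
  unfolding solution_def by (cases n) auto

lemma solution_step_entry:
  assumes sol: "solution m" and r: "r < q"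
  shows "m (Suc n) j $ r = (\<Sum>k\<in>Ks. \<Sum>c<q. E k $$ (r,c) * m n (j + k) $ c)"
  using sol r index_mult_mat_vec_sum[OF E_carrier solution_dim[OF sol] r]
  unfolding solution_def by simp

text \<open>A word \<open>w\<close> of length \<open>t\<close> indexes the term \<open>E w\<^sub>1 \<cdot> \<dots> \<cdot> E w\<^sub>t\<close> of the \<open>t\<close>-th power of the
  scheme; it shifts the spatial index by \<open>sum_list w\<close>.\<close>
definition words :: "nat \<Rightarrow> int list set" where
  "words t = {w. length w = t \<and> set w \<subseteq> Ks}"

definition word_mat :: "int list \<Rightarrow> real mat" where
  "word_mat w = foldr (\<lambda>k A. E k * A) w (1\<^sub>m q)"

lemma word_mat_simps [simp]: "word_mat [] = 1\<^sub>m q" "word_mat (k # w) = E k * word_mat w"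
  unfolding word_mat_def by simp_all

lemma word_mat_carrier [simp]: "word_mat w \<in> carrier_mat q q"
  by (induction w) (auto intro: mult_carrier_mat[OF E_carrier])

lemma finite_words: "finite (words t)"
  using finite_lists_length_eq[OF finite_Ks, of t] unfolding words_def by (simp add: conj_commute)

lemma words_0: "words 0 = {[]}"
  unfolding words_def by auto

lemma sum_words_Suc: "(\<Sum>w\<in>words (Suc t). f w) = (\<Sum>k\<in>Ks. \<Sum>w\<in>words t. f (k # w))"
proof -
  have "words (Suc t) = (\<lambda>(k,w). k # w) ` (Ks \<times> words t)"
    unfolding words_def by (auto simp: length_Suc_conv)
  moreover have "inj_on (\<lambda>(k,w). k # w) (Ks \<times> words t)"
    by (auto simp: inj_on_def)
  ultimately show ?thesis
    by (simp add: sum.reindex sum.cartesian_product case_prod_unfold)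
qed

lemma symbol_pow_entry:
  assumes \<kappa>: "\<kappa> \<noteq> 0" and i: "i < q" and j: "j < q"
  shows "(symbol \<kappa> ^\<^sub>m t) $$ (i,j)
       = (\<Sum>w\<in>words t. \<kappa> powi sum_list w * complex_of_real (word_mat w $$ (i,j)))"
  using i j
proof (induction t arbitrary: i j)
  case 0
  then show ?case by (simp add: words_0 symbol_def)
next
  case (Suc t)
  have "(symbol \<kappa> ^\<^sub>m Suc t) $$ (i,j) = (\<Sum>l<q. symbol \<kappa> $$ (i,l) * (symbol \<kappa> ^\<^sub>m t) $$ (l,j))"
    unfolding pow_mat_Suc_left[OF symbol_carrier]
    using Suc.prems by (intro index_mult_mat_sum) auto
  also have "\<dots> = (\<Sum>l<q. \<Sum>k\<in>Ks. \<Sum>w\<in>words t.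
      \<kappa> powi (k + sum_list w) * complex_of_real (E k $$ (i,l) * word_mat w $$ (l,j)))"
    using Suc \<kappa> by (simp add: symbol_def sum_product power_int_add mult_ac)
  also have "\<dots> = (\<Sum>k\<in>Ks. \<Sum>w\<in>words t. \<kappa> powi sum_list (k # w) * complex_of_real (word_mat (k # w) $$ (i,j)))"
    using Suc.prems
    by (simp add: index_mult_mat_sum[of _ q q _ q] sum_distrib_left sum.swap[of _ "{..<q}"])
  also have "\<dots> = (\<Sum>w\<in>words (Suc t). \<kappa> powi sum_list w * complex_of_real (word_mat w $$ (i,j)))"
    by (rule sum_words_Suc[symmetric])
  finally show ?case .
qed

lemma solution_iterate_entry:
  fixes m :: "nat \<Rightarrow> int \<Rightarrow> real vec"
  assumes sol: "solution m" and r: "r < q"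
  shows "m (n + t) j $ r = (\<Sum>w\<in>words t. \<Sum>c<q. word_mat w $$ (r,c) * m n (j + sum_list w) $ c)"
  using r
proof (induction t arbitrary: j r)
  case 0
  then show ?case by (simp add: words_0 if_distrib[of "\<lambda>x. x * _"] cong: if_cong)
next
  case (Suc t)
  have "m (n + Suc t) j $ r = (\<Sum>k\<in>Ks. \<Sum>c<q. E k $$ (r,c) * m (n + t) (j + k) $ c)"
    using solution_step_entry[OF sol Suc.prems] by simp
  also have "\<dots> = (\<Sum>k\<in>Ks. \<Sum>c<q. E k $$ (r,c) *
      (\<Sum>w\<in>words t. \<Sum>d<q. word_mat w $$ (c,d) * m n (j + k + sum_list w) $ d))"
    using Suc.IH by simp
  also have "\<dots> = (\<Sum>k\<in>Ks. \<Sum>w\<in>words t. \<Sum>d<q.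
      (\<Sum>c<q. E k $$ (r,c) * word_mat w $$ (c,d)) * m n (j + k + sum_list w) $ d)"
    by (simp only: sum_mult_nested_swap)
  also have "\<dots> = (\<Sum>k\<in>Ks. \<Sum>w\<in>words t. \<Sum>d<q.
      word_mat (k # w) $$ (r,d) * m n (j + sum_list (k # w)) $ d)"
    using Suc.prems by (simp add: index_mult_mat_sum[of _ q q _ q] add.assoc)
  also have "\<dots> = (\<Sum>w\<in>words (Suc t). \<Sum>d<q. word_mat w $$ (r,d) * m n (j + sum_list w) $ d)"
    by (rule sum_words_Suc[symmetric])
  finally show ?case .
qed

lemma solution_annihilated:
  fixes m :: "nat \<Rightarrow> int \<Rightarrow> real vec" and g :: "nat \<Rightarrow> int \<Rightarrow> real"
  assumes sol: "solution m" and r: "r < q" and L: "finite L"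
    and fin: "\<And>l. finite {k. g l k \<noteq> 0}"
    and ann: "\<And>\<kappa> c. \<kappa> \<noteq> 0 \<Longrightarrow> c < q \<Longrightarrow>
       (\<Sum>l\<in>L. laurent_eval (g l) \<kappa> * (symbol \<kappa> ^\<^sub>m l) $$ (r,c)) = 0"
  shows "(\<Sum>l\<in>L. apply_shift (g l) (\<lambda>i. m (p + l) i $ r) j) = 0"
proof -
  define J where "J = (SIGMA l:L. {k. g l k \<noteq> 0} \<times> words l)"
  have J: "finite J" unfolding J_def using L fin finite_words by auto
  have unnest: "(\<Sum>l\<in>L. \<Sum>k\<in>{k. g l k \<noteq> 0}. \<Sum>w\<in>words l. h (l,k,w)) = (\<Sum>x\<in>J. h x)"
    for h :: "nat \<times> int \<times> int list \<Rightarrow> 'a::comm_monoid_add"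
    unfolding J_def using L fin finite_words by (simp add: sum.Sigma sum.cartesian_product)
  \<comment> \<open>Expanding each \<open>m (p + l)\<close> back to time \<open>p\<close> indexes all terms by \<open>(l,k,w) \<in> J\<close>, with shift \<open>\<sigma>\<close>.\<close>
  define a where "a c = (\<lambda>(l,k,w). g l k * word_mat w $$ (r,c))" for c
  define \<sigma> :: "nat \<times> int \<times> int list \<Rightarrow> int" where "\<sigma> = (\<lambda>(l,k,w). k + sum_list w)"
  have "(\<Sum>l\<in>L. apply_shift (g l) (\<lambda>i. m (p + l) i $ r) j)
      = (\<Sum>x\<in>J. \<Sum>c<q. a c x * m p (j + \<sigma> x) $ c)"
    unfolding apply_shift_def unnest[symmetric] solution_iterate_entry[OF sol r]
    by (simp add: a_def \<sigma>_def sum_distrib_left mult.assoc add.assoc)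
  also have "\<dots> = (\<Sum>c<q. \<Sum>x\<in>J. a c x * m p (j + \<sigma> x) $ c)"
    by (rule sum.swap)
  also have "\<dots> = 0"
  proof (rule sum.neutral, intro ballI)
    fix c assume "c \<in> {..<q}"
    show "(\<Sum>x\<in>J. a c x * m p (j + \<sigma> x) $ c) = 0"
    proof (rule laurent_sum_eq_0_transfer[OF J, where a = "a c" and \<sigma> = \<sigma> and x = "\<lambda>d. m p (j + d) $ c"])
      fix \<kappa> :: complex assume "\<kappa> \<noteq> 0"
      have "(\<Sum>x\<in>J. complex_of_real (a c x) * \<kappa> powi \<sigma> x)
          = (\<Sum>l\<in>L. \<Sum>k\<in>{k. g l k \<noteq> 0}. \<Sum>w\<in>words l. (complex_of_real (g l k) * \<kappa> powi k)
              * (\<kappa> powi sum_list w * complex_of_real (word_mat w $$ (r,c))))"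
        unfolding unnest[symmetric] a_def \<sigma>_def using \<open>\<kappa> \<noteq> 0\<close>
        by (simp add: power_int_add mult_ac)
      also have "\<dots> = (\<Sum>l\<in>L. laurent_eval (g l) \<kappa> * (symbol \<kappa> ^\<^sub>m l) $$ (r,c))"
        using \<open>\<kappa> \<noteq> 0\<close> r \<open>c \<in> {..<q}\<close>
        by (simp add: laurent_eval_def symbol_pow_entry sum_product)
      finally
      show "(\<Sum>x\<in>J. complex_of_real (a c x) * \<kappa> powi \<sigma> x) = 0"
        using ann[OF \<open>\<kappa> \<noteq> 0\<close>] \<open>c \<in> {..<q}\<close> by simp
    qed
  qed
  finally show ?thesis .
qed

definition coeff_sq_sum :: real where
  "coeff_sq_sum = (\<Sum>k\<in>Ks. \<Sum>r<q. \<Sum>c<q. (E k $$ (r,c))^2)"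

definition growth_bound :: real where
  "growth_bound = max 1 (coeff_sq_sum * card Ks)"

lemma growth_bound_ge_1: "1 \<le> growth_bound"
  unfolding growth_bound_def by simp

lemma solution_vsq_step:
  fixes m :: "nat \<Rightarrow> int \<Rightarrow> real vec"
  assumes sol: "solution m"
  shows "vsq (m (Suc n) j) \<le> coeff_sq_sum * (\<Sum>k\<in>Ks. vsq (m n (j + k)))"
proof -
  let ?P = "Ks \<times> {..<q}"
  let ?V = "\<Sum>k\<in>Ks. vsq (m n (j + k))"
  have row: "(m (Suc n) j $ r)^2 \<le> (\<Sum>(k,c)\<in>?P. (E k $$ (r,c))^2) * ?V" if "r < q" for r
  proof -
    have "m (Suc n) j $ r = (\<Sum>(k,c)\<in>?P. E k $$ (r,c) * m n (j + k) $ c)"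
      using solution_step_entry[OF sol that] by (simp add: sum.cartesian_product)
    moreover have "(\<Sum>(k,c)\<in>?P. (m n (j + k) $ c)^2) = ?V"
      using solution_dim[OF sol] by (simp add: sum.cartesian_product vsq_def)
    ultimately show ?thesis
      using Cauchy_Schwarz_ineq_sum[of "\<lambda>(k,c). E k $$ (r,c)" "\<lambda>(k,c). m n (j + k) $ c" ?P]
      by (simp add: case_prod_unfold)
  qed
  have "vsq (m (Suc n) j) = (\<Sum>r<q. (m (Suc n) j $ r)^2)"
    using solution_dim[OF sol] by (simp add: vsq_def)
  also have "\<dots> \<le> (\<Sum>r<q. (\<Sum>(k,c)\<in>?P. (E k $$ (r,c))^2) * ?V)"
    by (intro sum_mono row) simp
  also have "\<dots> = coeff_sq_sum * ?V"
    unfolding coeff_sq_sum_def sum_distrib_right[symmetric] sum.cartesian_product[symmetric]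
    by (subst sum.swap) simp
  finally show ?thesis .
qed

lemma solution_l2_step:
  fixes m :: "nat \<Rightarrow> int \<Rightarrow> real vec"
  assumes sol: "solution m" and summable: "(\<lambda>j. vsq (m n j)) summable_on UNIV"
  shows "(\<lambda>j. vsq (m (Suc n) j)) summable_on UNIV"
    and "(\<Sum>\<^sub>\<infinity>j. vsq (m (Suc n) j)) \<le> growth_bound * (\<Sum>\<^sub>\<infinity>j. vsq (m n j))"
proof -
  define V where "V j = coeff_sq_sum * (\<Sum>k\<in>Ks. vsq (m n (j + k)))" for j
  have shifted: "(\<lambda>j. vsq (m n (j + k))) summable_on UNIV" for k
    using summable_on_shift[OF summable] .
  have V: "V summable_on UNIV"
    unfolding V_def by (intro summable_on_cmult_right summable_on_sum finite_Ks shifted)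
  have le: "vsq (m (Suc n) j) \<le> V j" for j
    unfolding V_def by (rule solution_vsq_step[OF sol])
  show summ: "(\<lambda>j. vsq (m (Suc n) j)) summable_on UNIV"
    using V by (rule summable_on_comparison_test) (use le vsq_nonneg in auto)
  have "(\<Sum>\<^sub>\<infinity>j. vsq (m (Suc n) j)) \<le> (\<Sum>\<^sub>\<infinity>j. V j)"
    using summ V le by (rule infsum_mono)
  also have "\<dots> = coeff_sq_sum * card Ks * (\<Sum>\<^sub>\<infinity>j. vsq (m n j))"
    unfolding V_def infsum_cmult_right' infsum_sum[OF finite_Ks shifted]
    by (simp add: infsum_shift[of "\<lambda>j. vsq (m n j)"])
  also have "\<dots> \<le> growth_bound * (\<Sum>\<^sub>\<infinity>j. vsq (m n j))"
    unfolding growth_bound_def by (intro mult_right_mono infsum_nonneg vsq_nonneg) auto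
  finally show "(\<Sum>\<^sub>\<infinity>j. vsq (m (Suc n) j)) \<le> growth_bound * (\<Sum>\<^sub>\<infinity>j. vsq (m n j))" .
qed

lemma solution_l2_growth:
  fixes m :: "nat \<Rightarrow> int \<Rightarrow> real vec"
  assumes sol: "solution m" and summable: "(\<lambda>j. vsq (m 0 j)) summable_on UNIV"
  shows "(\<lambda>j. vsq (m n j)) summable_on UNIV
    \<and> (\<Sum>\<^sub>\<infinity>j. vsq (m n j)) \<le> growth_bound ^ n * (\<Sum>\<^sub>\<infinity>j. vsq (m 0 j))"
proof (induction n)
  case 0
  then show ?case using summable by simp
next
  case (Suc n)
  then have "(\<Sum>\<^sub>\<infinity>j. vsq (m (Suc n) j)) \<le> growth_bound * (growth_bound ^ n * (\<Sum>\<^sub>\<infinity>j. vsq (m 0 j)))"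
    using solution_l2_step(2)[OF sol] growth_bound_ge_1
    by (meson dual_order.trans mult_left_mono zero_le_one)
  then show ?case using solution_l2_step(1)[OF sol] Suc by (simp add: mult.assoc)
qed

lemma solution_l2_le_growth_pow:
  fixes m :: "nat \<Rightarrow> int \<Rightarrow> real vec"
  assumes sol: "solution m" and summable: "(\<lambda>j. vsq (m 0 j)) summable_on UNIV" and t: "t \<le> T"
  shows "(\<Sum>\<^sub>\<infinity>j. vsq (m t j)) \<le> growth_bound ^ T * (\<Sum>\<^sub>\<infinity>j. vsq (m 0 j))"
proof -
  have "(\<Sum>\<^sub>\<infinity>j. vsq (m t j)) \<le> growth_bound ^ t * (\<Sum>\<^sub>\<infinity>j. vsq (m 0 j))"
    using solution_l2_growth[OF sol summable] by blast
  also have "\<dots> \<le> growth_bound ^ T * (\<Sum>\<^sub>\<infinity>j. vsq (m 0 j))"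
    using t growth_bound_ge_1 by (intro mult_right_mono power_increasing infsum_nonneg vsq_nonneg) auto
  finally show ?thesis .
qed

end

section \<open>The lattice Boltzmann scheme\<close>

lemma minv_inverse:
  assumes M: "M \<in> carrier_mat n n" and inv: "invertible_mat M"
  shows "minv n M \<in> carrier_mat n n \<and> M * minv n M = 1\<^sub>m n \<and> minv n M * M = 1\<^sub>m n"
proof -
  obtain B where MB: "M * B = 1\<^sub>m (dim_row M)" and BM: "B * M = 1\<^sub>m (dim_row B)"
    using inv unfolding invertible_mat_def inverts_mat_def by auto
  have "dim_col B = n" using arg_cong[OF MB, of dim_col] M by auto
  moreover have "dim_row B = n" using arg_cong[OF BM, of dim_col] M by auto
  ultimately have "B \<in> carrier_mat n n \<and> M * B = 1\<^sub>m n \<and> B * M = 1\<^sub>m n"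
    using MB BM M by auto
  then show ?thesis unfolding minv_def by (rule someI)
qed

lemma minv_one: "minv n (1\<^sub>m n) = (1\<^sub>m n :: real mat)"
proof -
  have "invertible_mat (1\<^sub>m n :: real mat)"
    unfolding invertible_mat_def inverts_mat_def by (auto intro!: exI[of _ "1\<^sub>m n"])
  then show ?thesis using minv_inverse[OF one_carrier_mat] by (metis left_mult_one_mat)
qed

lemma Emat_carrier: "M \<in> carrier_mat q q \<Longrightarrow> Emat q c M sr eps k \<in> carrier_mat q q"
  unfolding Emat_def Kmat_def carrier_mat_def by simp

text \<open>The moments of paper index \<open>2..q\<close> with relaxation rate 1: the collision sets them to
  their equilibrium, so the corresponding columns of \<open>K\<close> vanish.\<close>
definition fully_relaxed :: "nat \<Rightarrow> (nat \<Rightarrow> real) \<Rightarrow> nat set" where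
  "fully_relaxed q sr = {l. 1 \<le> l \<and> l < q \<and> sr l = 1}"

lemma card_fully_relaxed: "card (fully_relaxed q sr) = q - 1 - num_s q sr"
proof -
  define S where "S = {l. 1 \<le> l \<and> l < q \<and> sr l \<noteq> 1}"
  have "fully_relaxed q sr \<union> S = {1..<q}" "fully_relaxed q sr \<inter> S = {}"
    unfolding fully_relaxed_def S_def by auto
  then have "card (fully_relaxed q sr) + card S = q - 1"
    by (metis card_Un_disjoint card_atLeastLessThan finite_Un finite_atLeastLessThan)
  then show ?thesis unfolding num_s_def S_def[symmetric] by simp
qed

lemma num_s_le: "num_s q sr \<le> q - 1"
proof -
  have "num_s q sr \<le> card {1..<q}" unfolding num_s_def by (rule card_mono) auto
  then show ?thesis by simp
qed

lemma Kmat_fully_relaxed_col: "i < q \<Longrightarrow> j \<in> fully_relaxed q sr \<Longrightarrow> Kmat q sr eps $$ (i,j) = 0"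
  unfolding Kmat_def fully_relaxed_def by auto

definition monic_coeffs :: "nat \<Rightarrow> (nat \<Rightarrow> int \<Rightarrow> real) \<Rightarrow> nat \<Rightarrow> int \<Rightarrow> real" where
  "monic_coeffs q gam l = (if l = q then (\<lambda>k. if k = 0 then 1 else 0) else gam l)"

lemma laurent_eval_unit: "laurent_eval (\<lambda>k. if k = 0 then 1 else 0) \<kappa> = 1"
proof -
  have "{k::int. (if k = 0 then 1 else 0 :: real) \<noteq> 0} = {0}" by auto
  then show ?thesis unfolding laurent_eval_def by simp
qed

lemma apply_shift_unit: "apply_shift (\<lambda>k. if k = 0 then 1 else 0) u j = u j"
proof -
  have "{k::int. (if k = 0 then 1 else 0 :: real) \<noteq> 0} = {0}" by auto
  then show ?thesis unfolding apply_shift_def by simp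
qed

locale lbm =
  fixes q :: nat and c :: "nat \<Rightarrow> int" and M :: "real mat" and sr eps :: "nat \<Rightarrow> real"
  assumes params: "lbm_params q c M sr eps"
begin

abbreviation s :: nat where "s \<equiv> num_s q sr"

lemma M_carrier: "M \<in> carrier_mat q q"
  using params unfolding lbm_params_def by auto

lemma minv_carrier: "minv q M \<in> carrier_mat q q"
  using params minv_inverse[OF M_carrier] unfolding lbm_params_def by auto

lemma Kmat_carrier: "Kmat q sr eps \<in> carrier_mat q q"
  unfolding Kmat_def by simp

end

sublocale lbm \<subseteq> laurent_scheme q "(\<lambda>i. - c i) ` {..<q}" "Emat q c M sr eps"
  by unfold_locales (simp_all add: Emat_carrier M_carrier)

context lbm
begin

text \<open>\<open>M\<^sup>-\<^sup>1 K\<close> maps the moments before a collision to the distribution functions after it.\<close>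
definition post_collision_mat :: "real mat" where
  "post_collision_mat = minv q M * Kmat q sr eps"

lemma post_collision_mat_carrier: "post_collision_mat \<in> carrier_mat q q"
  unfolding post_collision_mat_def using minv_carrier Kmat_carrier by simp

lemma Emat_entry:
  assumes i: "i < q" and j: "j < q"
  shows "Emat q c M sr eps k $$ (i,j)
       = (\<Sum>a<q. if k = - c a then M $$ (i,a) * post_collision_mat $$ (a,j) else 0)"
proof -
  let ?D = "mat q q (\<lambda>(i,j). if i = j \<and> c i = - k then 1 else (0::real))"
  have "Emat q c M sr eps k = M * ?D * post_collision_mat"
    unfolding Emat_def post_collision_mat_def using M_carrier minv_carrier Kmat_carrier
    by (subst assoc_mult_mat[of _ q q _ q _ q]) auto
  also have "(M * ?D * post_collision_mat) $$ (i,j)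
      = (\<Sum>a<q. M $$ (i,a) * ?D $$ (a,a) * post_collision_mat $$ (a,j))"
    by (rule index_diagonal_sandwich) (use M_carrier post_collision_mat_carrier i j in auto)
  finally show ?thesis by (auto intro!: sum.cong)
qed

lemma Ehat_entry:
  assumes i: "i < q" and j: "j < q"
  shows "Ehat q c M sr eps \<kappa> $$ (i,j)
       = (\<Sum>a<q. \<kappa> powi (- c a) * complex_of_real (M $$ (i,a) * post_collision_mat $$ (a,j)))"
proof -
  let ?D = "mat q q (\<lambda>(i,j). if i = j then \<kappa> powi (- c i) else 0)"
  let ?Mc = "map_mat complex_of_real M" and ?Wc = "map_mat complex_of_real post_collision_mat"
  have "Ehat q c M sr eps \<kappa> = ?Mc * ?D * ?Wc"
    unfolding Ehat_def post_collision_mat_def using M_carrier minv_carrier Kmat_carrier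
    by (subst assoc_mult_mat[of _ q q _ q _ q]) (auto simp: of_real_hom.mat_hom_mult)
  also have "(?Mc * ?D * ?Wc) $$ (i,j) = (\<Sum>a<q. ?Mc $$ (i,a) * ?D $$ (a,a) * ?Wc $$ (a,j))"
    by (rule index_diagonal_sandwich) (use M_carrier post_collision_mat_carrier i j in auto)
  also have "\<dots> = (\<Sum>a<q. \<kappa> powi (- c a) * complex_of_real (M $$ (i,a) * post_collision_mat $$ (a,j)))"
    using i j by (intro sum.cong refl)
      (simp add: carrier_matD[OF M_carrier] carrier_matD[OF post_collision_mat_carrier] mult_ac)
  finally show ?thesis .
qed

lemma Ehat_eq_symbol: "Ehat q c M sr eps \<kappa> = symbol \<kappa>"
proof (rule eq_matI)
  fix i j assume "i < dim_row (symbol \<kappa>)" "j < dim_col (symbol \<kappa>)"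
  then have i: "i < q" and j: "j < q" by (auto simp: symbol_def)
  let ?f = "\<lambda>a. complex_of_real (M $$ (i,a) * post_collision_mat $$ (a,j))"
  have "Ehat q c M sr eps \<kappa> $$ (i,j)
      = (\<Sum>a<q. \<Sum>k\<in>(\<lambda>i. - c i) ` {..<q}. if k = - c a then \<kappa> powi k * ?f a else 0)"
  proof (unfold Ehat_entry[OF i j], intro sum.cong refl)
    fix a assume "a \<in> {..<q}"
    then have "- c a \<in> (\<lambda>i. - c i) ` {..<q}" by simp
    then show "\<kappa> powi (- c a) * ?f a
        = (\<Sum>k\<in>(\<lambda>i. - c i) ` {..<q}. if k = - c a then \<kappa> powi k * ?f a else 0)"
      by (simp add: sum.delta[OF finite_Ks])
  qed
  also have "\<dots> = (\<Sum>k\<in>(\<lambda>i. - c i) ` {..<q}. \<Sum>a<q. if k = - c a then \<kappa> powi k * ?f a else 0)"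
    by (rule sum.swap)
  also have "\<dots> = (\<Sum>k\<in>(\<lambda>i. - c i) ` {..<q}. \<kappa> powi k * complex_of_real (Emat q c M sr eps k $$ (i,j)))"
    unfolding Emat_entry[OF i j] of_real_sum sum_distrib_left by (intro sum.cong refl) auto
  also have "\<dots> = symbol \<kappa> $$ (i,j)"
    using i j by (simp add: symbol_def)
  finally show "Ehat q c M sr eps \<kappa> $$ (i,j) = symbol \<kappa> $$ (i,j)" .
qed (simp_all add: Ehat_def symbol_def carrier_matD[OF M_carrier] carrier_matD[OF Kmat_carrier])

lemma symbol_fully_relaxed_col:
  assumes i: "i < q" and j: "j \<in> fully_relaxed q sr"
  shows "symbol \<kappa> $$ (i,j) = 0"
proof -
  have jq: "j < q" using j unfolding fully_relaxed_def by auto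
  have "Emat q c M sr eps k $$ (i,j) = 0" for k
  proof -
    let ?X = "M * mat q q (\<lambda>(i,j). if i = j \<and> c i = - k then 1 else 0) * minv q M"
    have X: "?X \<in> carrier_mat q q" using M_carrier minv_carrier by (meson mat_carrier mult_carrier_mat)
    have "Emat q c M sr eps k $$ (i,j) = (\<Sum>l<q. ?X $$ (i,l) * Kmat q sr eps $$ (l,j))"
      unfolding Emat_def by (rule index_mult_mat_sum[OF X Kmat_carrier i jq])
    then show ?thesis using Kmat_fully_relaxed_col[OF _ j] by simp
  qed
  then show ?thesis using i jq by (simp add: symbol_def)
qed

lemma coeff_char_poly_symbol:
  assumes cc: "char_coeffs q c M sr eps gam" and \<kappa>: "\<kappa> \<noteq> 0" and l: "l \<le> q"
  shows "coeff (char_poly (symbol \<kappa>)) l = laurent_eval (monic_coeffs q gam l) \<kappa>"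
proof -
  define P where "P = monom 1 q + (\<Sum>l<q. monom (laurent_eval (gam l) \<kappa>) l)"
  have "poly (char_poly (symbol \<kappa>)) z = poly P z" for z
  proof -
    have "- char_matrix (symbol \<kappa>) z = z \<cdot>\<^sub>m 1\<^sub>m q - Ehat q c M sr eps \<kappa>"
      unfolding char_matrix_def Ehat_eq_symbol by (intro eq_matI) (auto simp: symbol_def)
    then have "poly (char_poly (symbol \<kappa>)) z = det (z \<cdot>\<^sub>m 1\<^sub>m q - Ehat q c M sr eps \<kappa>)"
      using char_poly_matrix[OF symbol_carrier] by simp
    also have "\<dots> = poly P z"
      using cc \<kappa> unfolding char_coeffs_def by (simp add: P_def laurent_eval_def poly_sum poly_monom)
    finally show ?thesis .
  qed
  then have "char_poly (symbol \<kappa>) = P"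
    using poly_eq_poly_eq_iff by blast
  then show ?thesis
    using l by (auto simp: P_def monic_coeffs_def coeff_sum coeff_monom laurent_eval_unit)
qed

lemma symbol_annihilated:
  assumes cc: "char_coeffs q c M sr eps gam" and \<kappa>: "\<kappa> \<noteq> 0" and i: "i < q" and j: "j < q"
  shows "(\<Sum>l\<in>{q - 1 - s..q}. laurent_eval (monic_coeffs q gam l) \<kappa> * (symbol \<kappa> ^\<^sub>m l) $$ (i,j)) = 0"
proof -
  have "fully_relaxed q sr \<subseteq> {..<q}" unfolding fully_relaxed_def by auto
  then have "monom 1 (card (fully_relaxed q sr)) dvd char_poly (symbol \<kappa>)"
    using monom_dvd_char_poly_of_zero_cols[OF symbol_carrier _ symbol_fully_relaxed_col] by blast
  then have low: "coeff (char_poly (symbol \<kappa>)) l = 0" if "l < q - 1 - s" for l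
    using that by (simp add: monom_1_dvd_iff' card_fully_relaxed)
  have "0 = (\<Sum>l\<le>q. coeff (char_poly (symbol \<kappa>)) l * (symbol \<kappa> ^\<^sub>m l) $$ (i,j))"
    using cayley_hamilton_entry[OF symbol_carrier i j] by simp
  also have "\<dots> = (\<Sum>l\<in>{q - 1 - s..q}. coeff (char_poly (symbol \<kappa>)) l * (symbol \<kappa> ^\<^sub>m l) $$ (i,j))"
  proof (rule sum.mono_neutral_right)
    show "\<forall>l\<in>{..q} - {q - 1 - s..q}. coeff (char_poly (symbol \<kappa>)) l * (symbol \<kappa> ^\<^sub>m l) $$ (i,j) = 0"
    proof
      fix l assume "l \<in> {..q} - {q - 1 - s..q}"
      then have "l < q - 1 - s" by auto
      then show "coeff (char_poly (symbol \<kappa>)) l * (symbol \<kappa> ^\<^sub>m l) $$ (i,j) = 0" by (simp add: low)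
    qed
  qed auto
  also have "\<dots> = (\<Sum>l\<in>{q - 1 - s..q}. laurent_eval (monic_coeffs q gam l) \<kappa> * (symbol \<kappa> ^\<^sub>m l) $$ (i,j))"
  proof (rule sum.cong[OF refl])
    fix l assume "l \<in> {q - 1 - s..q}"
    then show "coeff (char_poly (symbol \<kappa>)) l * (symbol \<kappa> ^\<^sub>m l) $$ (i,j)
        = laurent_eval (monic_coeffs q gam l) \<kappa> * (symbol \<kappa> ^\<^sub>m l) $$ (i,j)"
      using coeff_char_poly_symbol[OF cc \<kappa>, of l] by simp
  qed
  finally show ?thesis by simp
qed

lemma solution_recurrence:
  fixes m :: "nat \<Rightarrow> int \<Rightarrow> real vec"
  assumes cc: "char_coeffs q c M sr eps gam" and sol: "solution m" and r: "r < q"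
  shows "m (p + q) j $ r = - (\<Sum>l\<in>{q - 1 - s..<q}. apply_shift (gam l) (\<lambda>i. m (p + l) i $ r) j)"
proof -
  have fin: "finite {k. monic_coeffs q gam l k \<noteq> 0}" for l
    using cc unfolding char_coeffs_def monic_coeffs_def
    by (cases "l = q") (auto intro: finite_subset[of _ "{0}"])
  have "(\<Sum>l\<in>{q - 1 - s..q}. apply_shift (monic_coeffs q gam l) (\<lambda>i. m (p + l) i $ r) j) = 0"
    using symbol_annihilated[OF cc] r by (intro solution_annihilated[OF sol r _ fin]) auto
  moreover have "{q - 1 - s..q} = insert q {q - 1 - s..<q}" by auto
  ultimately show ?thesis by (simp add: monic_coeffs_def apply_shift_unit)
qed

lemma solution_component_fd_recurrence:
  fixes m :: "nat \<Rightarrow> int \<Rightarrow> real vec"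
  assumes cc: "char_coeffs q c M sr eps gam" and sol: "solution m" and r: "r < q" and n: "s \<le> n"
  shows "m (Suc n + (q - 1 - s)) j $ r
       = - (\<Sum>l\<le>s. apply_shift (gam (q - l - 1)) (\<lambda>i. m (n - l + (q - 1 - s)) i $ r) j)"
proof -
  obtain p where p: "n = p + s" using n by (metis add.commute le_iff_add)
  have q: "s \<le> q - 1" "2 \<le> q" using num_s_le params unfolding lbm_params_def by auto
  have "(\<Sum>l\<le>s. apply_shift (gam (q - l - 1)) (\<lambda>i. m (n - l + (q - 1 - s)) i $ r) j)
      = (\<Sum>l\<le>s. apply_shift (gam (q - 1 - l)) (\<lambda>i. m (p + (q - 1 - l)) i $ r) j)"
    using p q by (intro sum.cong refl) (auto simp: diff_commute)
  also have "\<dots> = (\<Sum>l\<in>{q - 1 - s..<q}. apply_shift (gam l) (\<lambda>i. m (p + l) i $ r) j)"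
    by (rule sum.reindex_bij_witness[of _ "\<lambda>l. q - 1 - l" "\<lambda>l. q - 1 - l"]) (use q in auto)
  also have "\<dots> = - m (p + q) j $ r"
    using solution_recurrence[OF cc sol r] by simp
  also have "p + q = Suc n + (q - 1 - s)"
    using p q by simp
  finally show ?thesis by simp
qed

lemma fd_stable_solution_components:
  assumes cc: "char_coeffs q c M sr eps gam" and fd: "fd_stable q s gam"
  obtains C where "0 < C"
    and "\<And>m r t. solution m \<Longrightarrow> (\<lambda>j. vsq (m 0 j)) summable_on UNIV \<Longrightarrow> r < q \<Longrightarrow>
      (\<Sum>\<^sub>\<infinity>j. (m (t + (q - 1 - s)) j $ r)^2) \<le> C * (\<Sum>l\<le>s. \<Sum>\<^sub>\<infinity>j. (m (l + (q - 1 - s)) j $ r)^2)"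
proof -
  obtain C where C: "0 < C" and fd_bound: "\<forall>dx>0. \<forall>u :: nat \<Rightarrow> int \<Rightarrow> real.
       (\<forall>l\<le>s. (\<lambda>j. (u l j)^2) summable_on UNIV) \<longrightarrow>
       (\<forall>n\<ge>s. \<forall>j. u (Suc n) j = - (\<Sum>l\<le>s. apply_shift (gam (q - l - 1)) (u (n - l)) j)) \<longrightarrow>
       (\<forall>n. (\<Sum>\<^sub>\<infinity>j. dx * (u n j)^2) \<le> C * (\<Sum>l\<le>s. \<Sum>\<^sub>\<infinity>j. dx * (u l j)^2))"
    using fd unfolding fd_stable_def by blast
  show ?thesis
  proof (rule that[OF C])
    fix m :: "nat \<Rightarrow> int \<Rightarrow> real vec" and r t
    assume sol: "solution m" and summable0: "(\<lambda>j. vsq (m 0 j)) summable_on UNIV" and r: "r < q"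
    let ?u = "\<lambda>t i. m (t + (q - 1 - s)) i $ r"
    have summable: "(\<lambda>j. vsq (m t j)) summable_on UNIV" for t
      using solution_l2_growth[OF sol summable0] by blast
    have "(\<lambda>j. (?u l j)^2) summable_on UNIV" for l
      by (rule summable_on_component_sq[OF summable]) (simp add: solution_dim[OF sol] r)
    then have "\<forall>l\<le>s. (\<lambda>j. (?u l j)^2) summable_on UNIV"
      by blast
    moreover have "\<forall>n\<ge>s. \<forall>j. ?u (Suc n) j = - (\<Sum>l\<le>s. apply_shift (gam (q - l - 1)) (?u (n - l)) j)"
      using solution_component_fd_recurrence[OF cc sol r] by simp
    ultimately show "(\<Sum>\<^sub>\<infinity>j. (m (t + (q - 1 - s)) j $ r)^2)
        \<le> C * (\<Sum>l\<le>s. \<Sum>\<^sub>\<infinity>j. (m (l + (q - 1 - s)) j $ r)^2)"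
      using fd_bound[rule_format, of 1 ?u t] by simp
  qed
qed

lemma solution_l2_late_bound:
  assumes cc: "char_coeffs q c M sr eps gam" and fd: "fd_stable q s gam"
  obtains C where "0 < C"
    and "\<And>m t. solution m \<Longrightarrow> (\<lambda>j. vsq (m 0 j)) summable_on UNIV \<Longrightarrow>
      (\<Sum>\<^sub>\<infinity>j. vsq (m (t + (q - 1 - s)) j)) \<le> C * (\<Sum>l\<le>s. \<Sum>\<^sub>\<infinity>j. vsq (m (l + (q - 1 - s)) j))"
proof -
  obtain C where C: "0 < C" and component_bound: "\<And>m r t. solution m \<Longrightarrow>
      (\<lambda>j. vsq (m 0 j)) summable_on UNIV \<Longrightarrow> r < q \<Longrightarrow>
      (\<Sum>\<^sub>\<infinity>j. (m (t + (q - 1 - s)) j $ r)^2) \<le> C * (\<Sum>l\<le>s. \<Sum>\<^sub>\<infinity>j. (m (l + (q - 1 - s)) j $ r)^2)"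
    using fd_stable_solution_components[OF cc fd] by blast
  show ?thesis
  proof (rule that[OF C])
    fix m :: "nat \<Rightarrow> int \<Rightarrow> real vec" and t
    assume sol: "solution m" and summable0: "(\<lambda>j. vsq (m 0 j)) summable_on UNIV"
    have split: "(\<Sum>\<^sub>\<infinity>j. vsq (m t j)) = (\<Sum>r<q. \<Sum>\<^sub>\<infinity>j. (m t j $ r)^2)" for t
      using solution_l2_growth[OF sol summable0] solution_dim[OF sol]
      by (intro infsum_vsq_components) auto
    have "(\<Sum>\<^sub>\<infinity>j. vsq (m (t + (q - 1 - s)) j))
        \<le> (\<Sum>r<q. C * (\<Sum>l\<le>s. \<Sum>\<^sub>\<infinity>j. (m (l + (q - 1 - s)) j $ r)^2))"
      unfolding split by (intro sum_mono component_bound[OF sol summable0]) simp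
    also have "\<dots> = C * (\<Sum>l\<le>s. \<Sum>\<^sub>\<infinity>j. vsq (m (l + (q - 1 - s)) j))"
      by (simp add: split sum_distrib_left sum.swap[of _ "{..s}"])
    finally show "(\<Sum>\<^sub>\<infinity>j. vsq (m (t + (q - 1 - s)) j))
        \<le> C * (\<Sum>l\<le>s. \<Sum>\<^sub>\<infinity>j. vsq (m (l + (q - 1 - s)) j))" .
  qed
qed

lemma solution_l2_bound:
  assumes cc: "char_coeffs q c M sr eps gam" and fd: "fd_stable q s gam"
  obtains C where "0 < C"
    and "\<And>m n. solution m \<Longrightarrow> (\<lambda>j. vsq (m 0 j)) summable_on UNIV \<Longrightarrow>
      (\<Sum>\<^sub>\<infinity>j. vsq (m n j)) \<le> C * (\<Sum>\<^sub>\<infinity>j. vsq (m 0 j))"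
proof -
  obtain C where C: "0 < C" and late_bound: "\<And>m t. solution m \<Longrightarrow>
      (\<lambda>j. vsq (m 0 j)) summable_on UNIV \<Longrightarrow>
      (\<Sum>\<^sub>\<infinity>j. vsq (m (t + (q - 1 - s)) j)) \<le> C * (\<Sum>l\<le>s. \<Sum>\<^sub>\<infinity>j. vsq (m (l + (q - 1 - s)) j))"
    using solution_l2_late_bound[OF cc fd] by blast
  define B where "B = growth_bound ^ q"
  have B: "1 \<le> B" unfolding B_def using growth_bound_ge_1 by simp
  show ?thesis
  proof (rule that)
    show "0 < B * (1 + C * Suc s)" using B C by (simp add: add_pos_nonneg)
  next
    fix m :: "nat \<Rightarrow> int \<Rightarrow> real vec" and n
    assume sol: "solution m" and summable0: "(\<lambda>j. vsq (m 0 j)) summable_on UNIV"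
    define S where "S t = (\<Sum>\<^sub>\<infinity>j. vsq (m t j))" for t
    have S0: "0 \<le> S 0" unfolding S_def by (intro infsum_nonneg vsq_nonneg)
    have early: "S t \<le> B * S 0" if "t \<le> q" for t
      unfolding S_def B_def by (rule solution_l2_le_growth_pow[OF sol summable0 that])
    have "S n \<le> B * (1 + C * Suc s) * S 0"
    proof (cases "n < q - 1 - s")
      case True
      then have "S n \<le> B * S 0" by (intro early) simp
      also have "\<dots> \<le> B * (1 + C * Suc s) * S 0"
        using B C S0 by (intro mult_right_mono mult_left_mono) auto
      finally show ?thesis .
    next
      case False
      then obtain t where "n = t + (q - 1 - s)" by (metis add.commute le_add_diff_inverse not_less)
      then have "S n \<le> C * (\<Sum>l\<le>s. S (l + (q - 1 - s)))"
        unfolding S_def using late_bound[OF sol summable0, of t] by simp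
      also have "\<dots> \<le> C * (\<Sum>l\<le>s. B * S 0)"
        using num_s_le[of q sr] C by (intro mult_left_mono sum_mono early) auto
      also have "\<dots> = B * (C * Suc s) * S 0"
        by simp
      also have "\<dots> \<le> B * (1 + C * Suc s) * S 0"
        using B C S0 by (intro mult_right_mono mult_left_mono) auto
      finally show ?thesis .
    qed
    then show "(\<Sum>\<^sub>\<infinity>j. vsq (m n j)) \<le> B * (1 + C * Suc s) * (\<Sum>\<^sub>\<infinity>j. vsq (m 0 j))"
      unfolding S_def .
  qed
qed

theorem lbm_stable_if_fd_stable:
  assumes cc: "char_coeffs q c M sr eps gam" and fd: "fd_stable q s gam"
  shows "lbm_stable q c M sr eps"
proof -
  obtain C where C: "0 < C" and bound: "\<And>m n. solution m \<Longrightarrow> (\<lambda>j. vsq (m 0 j)) summable_on UNIV \<Longrightarrow>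
      (\<Sum>\<^sub>\<infinity>j. vsq (m n j)) \<le> C * (\<Sum>\<^sub>\<infinity>j. vsq (m 0 j))"
    using solution_l2_bound[OF cc fd] by blast
  show ?thesis unfolding lbm_stable_def
  proof (intro exI[of _ C] conjI allI impI)
    show "0 < C" by (rule C)
  next
    fix dx :: real and m :: "nat \<Rightarrow> int \<Rightarrow> real vec" and n
    assume dx: "0 < dx" and dim0: "\<forall>j. dim_vec (m 0 j) = q"
      and summable0: "(\<lambda>j. vsq (m 0 j)) summable_on UNIV"
      and step: "\<forall>n j. m (Suc n) j = vec q (\<lambda>r. \<Sum>k\<in>(\<lambda>i. - c i) ` {..<q}. (Emat q c M sr eps k *\<^sub>v m n (j + k)) $ r)"
    have sol: "solution m" unfolding solution_def using dim0 step by simp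
    have "(\<Sum>\<^sub>\<infinity>j. dx * vsq (m n j)) = dx * (\<Sum>\<^sub>\<infinity>j. vsq (m n j))"
      by (rule infsum_cmult_right')
    also have "\<dots> \<le> dx * (C * (\<Sum>\<^sub>\<infinity>j. vsq (m 0 j)))"
      using bound[OF sol summable0] dx by simp
    also have "\<dots> = C * (\<Sum>\<^sub>\<infinity>j. dx * vsq (m 0 j))"
      by (simp add: infsum_cmult_right')
    finally show "(\<Sum>\<^sub>\<infinity>j. dx * vsq (m n j)) \<le> C * (\<Sum>\<^sub>\<infinity>j. dx * vsq (m 0 j))" .
  qed
qed

end

section \<open>A stable lattice Boltzmann scheme with an unstable Finite Difference scheme\<close>

text \<open>\<open>q = 3\<close>, \<open>M = I\<close>, all velocities zero and \<open>s\<^sub>2 = s\<^sub>3 = 2\<close>: then \<open>K = Ehat(\<kappa>) = diag(1, -1, -1)\<close>,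
  whose characteristic polynomial \<open>(z - 1)(z + 1)\<^sup>2 = z\<^sup>3 + z\<^sup>2 - z - 1\<close> has the double root \<open>-1\<close>.\<close>

definition cex_c :: "nat \<Rightarrow> int" where "cex_c i = 0"
definition cex_sr :: "nat \<Rightarrow> real" where "cex_sr i = 2"
definition cex_eps :: "nat \<Rightarrow> real" where "cex_eps i = (if i = 0 then 1 else 0)"
definition cex_gam :: "nat \<Rightarrow> int \<Rightarrow> real" where
  "cex_gam l k = (if k = 0 then (if l = 0 then -1 else if l = 1 then -1 else if l = 2 then 1 else 0) else 0)"

definition cex_diag :: "'a :: ring_1 mat" where
  "cex_diag = mat 3 3 (\<lambda>(i,j). if i = j then (if i = 0 then 1 else -1) else 0)"

lemma cex_gam_support: "l < 3 \<Longrightarrow> {k. cex_gam l k \<noteq> 0} = {0}"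
  by (auto simp: cex_gam_def split: if_splits)

lemma cex_Kmat: "Kmat 3 cex_sr cex_eps = cex_diag"
  unfolding Kmat_def cex_sr_def cex_eps_def cex_diag_def by (rule eq_matI) auto

lemma cex_params: "lbm_params 3 cex_c (1\<^sub>m 3) cex_sr cex_eps"
  unfolding lbm_params_def cex_sr_def cex_eps_def invertible_mat_def inverts_mat_def
  by (auto intro!: exI[of _ "1\<^sub>m 3"])

lemma cex_Ehat: "Ehat 3 cex_c (1\<^sub>m 3) cex_sr cex_eps \<kappa> = cex_diag"
proof -
  have "mat 3 3 (\<lambda>(i,j). if i = j then \<kappa> powi (- cex_c i) else 0) = (1\<^sub>m 3 :: complex mat)"
    by (rule eq_matI) (auto simp: cex_c_def)
  moreover have "map_mat complex_of_real (1\<^sub>m 3) = 1\<^sub>m 3" by (rule eq_matI) auto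
  ultimately show ?thesis
    unfolding Ehat_def minv_one cex_Kmat by (intro eq_matI) (auto simp: cex_diag_def)
qed

lemma cex_char_coeffs: "char_coeffs 3 cex_c (1\<^sub>m 3) cex_sr cex_eps cex_gam"
proof -
  have det: "det (z \<cdot>\<^sub>m 1\<^sub>m 3 - Ehat 3 cex_c (1\<^sub>m 3) cex_sr cex_eps \<kappa>) = (z - 1) * (z + 1) * (z + 1)"
    for z \<kappa>
  proof -
    let ?A = "z \<cdot>\<^sub>m 1\<^sub>m 3 - Ehat 3 cex_c (1\<^sub>m 3) cex_sr cex_eps \<kappa>"
    have "det ?A = prod_list (diag_mat ?A)"
      by (rule det_upper_triangular) (auto simp: cex_Ehat cex_diag_def upper_triangular_def)
    also have "diag_mat ?A = [z - 1, z + 1, z + 1]"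
      unfolding diag_mat_def cex_Ehat cex_diag_def by (simp add: upt_rec)
    finally show ?thesis by simp
  qed
  show ?thesis unfolding char_coeffs_def
  proof (intro conjI allI impI)
    fix l show "finite {k. cex_gam l k \<noteq> 0}"
      by (rule finite_subset[of _ "{0}"]) (auto simp: cex_gam_def split: if_splits)
  next
    fix \<kappa> z :: complex
    have "(\<Sum>l<3. (\<Sum>k\<in>{k. cex_gam l k \<noteq> 0}. complex_of_real (cex_gam l k) * \<kappa> powi k) * z ^ l)
        = (\<Sum>l<3. complex_of_real (cex_gam l 0) * z ^ l)"
      by (rule sum.cong) (auto simp: cex_gam_support)
    also have "\<dots> = -1 - z + z^2" by (simp add: numeral_3_eq_3 cex_gam_def power2_eq_square)
    finally show "det (z \<cdot>\<^sub>m 1\<^sub>m 3 - Ehat 3 cex_c (1\<^sub>m 3) cex_sr cex_eps \<kappa>) =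
        z ^ 3 + (\<Sum>l<3. (\<Sum>k\<in>{k. cex_gam l k \<noteq> 0}. complex_of_real (cex_gam l k) * \<kappa> powi k) * z ^ l)"
      unfolding det by (simp add: algebra_simps power2_eq_square power3_eq_cube)
  qed
qed

lemma cex_lbm_stable: "lbm_stable 3 cex_c (1\<^sub>m 3) cex_sr cex_eps"
  unfolding lbm_stable_def
proof (intro exI[of _ 1] conjI allI impI)
  fix dx :: real and m :: "nat \<Rightarrow> int \<Rightarrow> real vec"
  assume dim0: "\<forall>j. dim_vec (m 0 j) = 3"
    and step: "\<forall>n j. m (Suc n) j = vec 3 (\<lambda>r. \<Sum>k\<in>(\<lambda>i. - cex_c i) ` {..<3}.
        (Emat 3 cex_c (1\<^sub>m 3) cex_sr cex_eps k *\<^sub>v m n (j + k)) $ r)"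
  have shifts: "(\<lambda>i. - cex_c i) ` {..<3} = {0}"
    unfolding cex_c_def by (auto intro: image_eqI[of _ _ 0])
  have "Emat 3 cex_c (1\<^sub>m 3) cex_sr cex_eps 0 = cex_diag"
  proof -
    have "mat 3 3 (\<lambda>(i,j). if i = j \<and> cex_c i = - 0 then 1 else 0) = (1\<^sub>m 3 :: real mat)"
      by (rule eq_matI) (auto simp: cex_c_def)
    then show ?thesis unfolding Emat_def minv_one cex_Kmat by (intro eq_matI) (auto simp: cex_diag_def)
  qed
  then have "m (Suc n) j = vec 3 (\<lambda>r. (cex_diag *\<^sub>v m n j) $ r)" for n j
    using step by (simp add: shifts)
  then have "dim_vec (m n j) = 3 \<and> vsq (m n j) = vsq (m 0 j)" for n j
    using dim0 by (induction n) (auto simp: vsq_def cex_diag_def numeral_3_eq_3 scalar_prod_def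
        mult_mat_vec_def row_def)
  then have "(\<lambda>j. dx * vsq (m n j)) = (\<lambda>j. dx * vsq (m 0 j))" for n
    by auto
  then show "(\<Sum>\<^sub>\<infinity>j. dx * vsq (m n j)) \<le> 1 * (\<Sum>\<^sub>\<infinity>j. dx * vsq (m 0 j))" for n
    by (metis order_refl mult_1)
qed simp

definition cex_growing :: "nat \<Rightarrow> int \<Rightarrow> real" where
  "cex_growing n j = (if j = 0 then (-1)^n * real n else 0)"

lemma cex_growing_sq: "(\<lambda>j. (cex_growing n j)^2) = (\<lambda>j. if j = 0 then (real n)^2 else 0)"
proof -
  have "((-1::real)^n)^2 = 1"
    by (induct n) (auto simp: power2_eq_square)
  then show ?thesis by (auto simp: cex_growing_def power_mult_distrib)
qed

lemma summable_cex_growing_sq: "(\<lambda>j. (cex_growing n j)^2) summable_on UNIV"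
proof (rule finite_nonzero_values_imp_summable_on)
  show "finite {j \<in> UNIV. (cex_growing n j)^2 \<noteq> 0}"
    by (rule finite_subset[of _ "{0}"]) (auto simp: cex_growing_def)
qed

lemma infsum_cex_growing_sq: "(\<Sum>\<^sub>\<infinity>j. (cex_growing n j)^2) = (real n)^2"
proof -
  have "(\<Sum>\<^sub>\<infinity>j::int. if j = 0 then (real n)^2 else 0) = (\<Sum>\<^sub>\<infinity>j\<in>{0::int}. if j = 0 then (real n)^2 else 0)"
    by (rule infsum_cong_neutral) auto
  then show ?thesis unfolding cex_growing_sq by simp
qed

lemma cex_growing_recurrence:
  assumes "2 \<le> n"
  shows "cex_growing (Suc n) j = - (\<Sum>l\<le>2. apply_shift (cex_gam (3 - l - 1)) (cex_growing (n - l)) j)"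
proof -
  obtain p where p: "n = p + 2" using assms by (metis add.commute le_Suc_ex)
  have "(\<Sum>l\<le>2. apply_shift (cex_gam (3 - l - 1)) (cex_growing (n - l)) j)
      = (\<Sum>l\<le>2. cex_gam (3 - l - 1) 0 * cex_growing (n - l) j)"
    by (rule sum.cong) (auto simp: apply_shift_def cex_gam_support)
  also have "\<dots> = cex_growing n j - cex_growing (n - 1) j - cex_growing (n - 2) j"
    by (simp add: numeral_2_eq_2 cex_gam_def)
  also have "\<dots> = - cex_growing (Suc n) j"
    unfolding p by (simp add: cex_growing_def algebra_simps)
  finally show ?thesis by simp
qed

lemma cex_num_s: "num_s 3 cex_sr = 2"
proof -
  have "{l. 1 \<le> l \<and> l < (3::nat) \<and> cex_sr l \<noteq> 1} = {1,2}" by (auto simp: cex_sr_def)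
  then show ?thesis unfolding num_s_def by simp
qed

lemma cex_not_fd_stable: "\<not> fd_stable 3 (num_s 3 cex_sr) cex_gam"
proof
  assume "fd_stable 3 (num_s 3 cex_sr) cex_gam"
  then obtain C where fd: "\<forall>dx>0. \<forall>u :: nat \<Rightarrow> int \<Rightarrow> real.
       (\<forall>l\<le>2. (\<lambda>j. (u l j)^2) summable_on UNIV) \<longrightarrow>
       (\<forall>n\<ge>2. \<forall>j. u (Suc n) j = - (\<Sum>l\<le>2. apply_shift (cex_gam (3 - l - 1)) (u (n - l)) j)) \<longrightarrow>
       (\<forall>n. (\<Sum>\<^sub>\<infinity>j. dx * (u n j)^2) \<le> C * (\<Sum>l\<le>2. \<Sum>\<^sub>\<infinity>j. dx * (u l j)^2))"
    unfolding fd_stable_def cex_num_s by blast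
  have "\<forall>l\<le>2. (\<lambda>j. (cex_growing l j)^2) summable_on UNIV"
    using summable_cex_growing_sq by blast
  moreover have "\<forall>n\<ge>2. \<forall>j. cex_growing (Suc n) j
      = - (\<Sum>l\<le>2. apply_shift (cex_gam (3 - l - 1)) (cex_growing (n - l)) j)"
    using cex_growing_recurrence by blast
  ultimately have "(\<Sum>\<^sub>\<infinity>j. (cex_growing n j)^2) \<le> C * (\<Sum>l\<le>2. \<Sum>\<^sub>\<infinity>j. (cex_growing l j)^2)"
    for n using fd[rule_format, of 1 cex_growing n] by simp
  moreover have "{..2::nat} = {0, 1, 2}" by auto
  ultimately have "(real n)^2 \<le> 5 * C" for n
    unfolding infsum_cex_growing_sq by (simp add: mult.commute)
  moreover obtain n :: nat where "5 * C < real n"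
    using reals_Archimedean2 by blast
  moreover have "real n \<le> (real n)^2"
    by (cases n) (auto simp: power2_eq_square)
  ultimately show False
    by (meson less_le_trans not_le order_trans)
qed

theorem mainTheorem1:
  shows "(\<forall>q c M sr eps gam. lbm_params q c M sr eps \<longrightarrow> char_coeffs q c M sr eps gam \<longrightarrow>
            fd_stable q (num_s q sr) gam \<longrightarrow> lbm_stable q c M sr eps)
       \<and> (\<exists>q c M sr eps gam. lbm_params q c M sr eps \<and> char_coeffs q c M sr eps gam \<and>
            lbm_stable q c M sr eps \<and> \<not> fd_stable q (num_s q sr) gam)"
proof (rule conjI)
  show "\<forall>q c M sr eps gam. lbm_params q c M sr eps \<longrightarrow> char_coeffs q c M sr eps gam \<longrightarrow>
      fd_stable q (num_s q sr) gam \<longrightarrow> lbm_stable q c M sr eps"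
    using lbm.lbm_stable_if_fd_stable unfolding lbm_def by blast
  show "\<exists>q c M sr eps gam. lbm_params q c M sr eps \<and> char_coeffs q c M sr eps gam \<and>
      lbm_stable q c M sr eps \<and> \<not> fd_stable q (num_s q sr) gam"
    using cex_params cex_char_coeffs cex_lbm_stable cex_not_fd_stable by blast
qed

end
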